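(* Assume the setting below with $\mu_+(1)\le1$ and suppose there is $\varepsilon\in(0,1]$ with $\kappa(s)=0$ for all $s\in(0,\varepsilon)$. Assume (A1), (A2), (A4). Then there is $\lambda_0>0$ such that for every $\lambda\in(0,\lambda_0)$ there is no cavitating equilibrium solution with $r(1)=\lambda$.
   Context: Setting: $n\ge2$; $\kappa$ continuous on $[0,\infty)$, $\mu_+(\lambda)=\int_0^\lambda s\max\{\kappa(s),0\}ds$; $f$ solves $f''+\kappa f=0$, $f(0)=0$, $f'(0)=1$. $\Phi(v_1,\dots,v_n)=\sum_i\phi(v_i)+h(v_1\cdots v_n)$, $\tau(\rho)=f(r(\rho))/f(\rho)$, $T(\rho)=\tau^{n-1}\big[\phi'(r')+h'(r'\tau^{n-1})\tau^{n-1}\big]$. An equilibrium solution with $r(1)=\lambda$ is $r\in C^1(0,1]$, twice differentiable on $(0,1)$, $r'>0$ on $(0,1]$, $r(0):=\lim_{\rho\to0^+}r(\rho)\ge0$, $r(1)=\lambda$, satisfying on $(0,1)$ $$f(\rho)\big[\phi''(r')+h''(r'\tau^{n-1})\tau^{2(n-1)}\big]r''=(n-1)\big[f'(r)\phi'(\tau)-f'(\rho)\phi'(r')\big]-(n-1)\big(f'(r)r'-f'(\rho)\tau\big)h''(r'\tau^{n-1})\,r'\tau^{2n-3};$$ it is cavitating if $r(0)>0$ and $\lim_{\rho\to0^+}T(\rho)=0$. (A1) $h:(0,\infty)\to\mathbb R$ is $C^2$ and strictly convex. (A2) $\lim_{v\to0^+}h(v)=\lim_{v\to\infty}h(v)/v=+\infty$.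 (A4) $\phi:(0,\infty)\to(0,\infty)$ is $C^2$ and convex. *)

theory Defs
  imports "HOL-Analysis.Analysis"
begin

definition strictly_convex_on :: "real set \<Rightarrow> (real \<Rightarrow> real) \<Rightarrow> bool" where
  "strictly_convex_on S g \<longleftrightarrow>
     (\<forall>x\<in>S. \<forall>y\<in>S. x \<noteq> y \<longrightarrow> (\<forall>t. 0 < t \<and> t < 1 \<longrightarrow>
        g ((1 - t) * x + t * y) < (1 - t) * g x + t * g y))"

definition mu_plus :: "(real \<Rightarrow> real) \<Rightarrow> real \<Rightarrow> real" where
  "mu_plus \<kappa> L = integral {0..L} (\<lambda>s. s * max (\<kappa> s) 0)"

definition tau :: "(real \<Rightarrow> real) \<Rightarrow> (real \<Rightarrow> real) \<Rightarrow> real \<Rightarrow> real" where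
  "tau f r \<rho> = f (r \<rho>) / f \<rho>"

definition T_fun :: "nat \<Rightarrow> (real \<Rightarrow> real) \<Rightarrow> (real \<Rightarrow> real) \<Rightarrow> (real \<Rightarrow> real)
    \<Rightarrow> (real \<Rightarrow> real) \<Rightarrow> (real \<Rightarrow> real) \<Rightarrow> real \<Rightarrow> real" where
  "T_fun n f \<phi>' h' r r' \<rho> =
     tau f r \<rho> ^ (n - 1) * (\<phi>' (r' \<rho>) + h' (r' \<rho> * tau f r \<rho> ^ (n - 1)) * tau f r \<rho> ^ (n - 1))"

definition equilibrium_solution ::
  "nat \<Rightarrow> (real \<Rightarrow> real) \<Rightarrow> (real \<Rightarrow> real) \<Rightarrow> (real \<Rightarrow> real) \<Rightarrow> (real \<Rightarrow> real)
   \<Rightarrow> (real \<Rightarrow> real) \<Rightarrow> (real \<Rightarrow> real) \<Rightarrow> real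
   \<Rightarrow> (real \<Rightarrow> real) \<Rightarrow> (real \<Rightarrow> real) \<Rightarrow> (real \<Rightarrow> real) \<Rightarrow> real \<Rightarrow> bool" where
  "equilibrium_solution n f f' \<phi>' \<phi>'' h' h'' L r r' r'' r0 \<longleftrightarrow>
     (\<forall>\<rho>\<in>{0<..1}. (r has_real_derivative r' \<rho>) (at \<rho> within {0<..1})) \<and>
     continuous_on {0<..1} r' \<and>
     (\<forall>\<rho>\<in>{0<..<1}. (r' has_real_derivative r'' \<rho>) (at \<rho>)) \<and>
     (\<forall>\<rho>\<in>{0<..1}. r' \<rho> > 0) \<and>
     (r \<longlongrightarrow> r0) (at_right 0) \<and> r0 \<ge> 0 \<and>
     r 1 = L \<and>
     (\<forall>\<rho>\<in>{0<..<1}.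
        f \<rho> * (\<phi>'' (r' \<rho>) + h'' (r' \<rho> * tau f r \<rho> ^ (n - 1)) * tau f r \<rho> ^ (2 * (n - 1))) * r'' \<rho>
        = real (n - 1) * (f' (r \<rho>) * \<phi>' (tau f r \<rho>) - f' \<rho> * \<phi>' (r' \<rho>))
          - real (n - 1) * (f' (r \<rho>) * r' \<rho> - f' \<rho> * tau f r \<rho>)
              * h'' (r' \<rho> * tau f r \<rho> ^ (n - 1)) * r' \<rho> * tau f r \<rho> ^ (2 * n - 3))"

definition cavitating ::
  "nat \<Rightarrow> (real \<Rightarrow> real) \<Rightarrow> (real \<Rightarrow> real) \<Rightarrow> (real \<Rightarrow> real)
   \<Rightarrow> (real \<Rightarrow> real) \<Rightarrow> (real \<Rightarrow> real) \<Rightarrow> real \<Rightarrow> bool" where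
  "cavitating n f \<phi>' h' r r' r0 \<longleftrightarrow>
     r0 > 0 \<and> (T_fun n f \<phi>' h' r r' \<longlongrightarrow> 0) (at_right 0)"

end

theory Submission
  imports Defs
begin

(* Since kappa vanishes on (0, eps), the solution f of f'' + kappa f = 0 is the
   identity there, so near the centre an equilibrium is a solution of the flat (Euclidean)
   radial equation.  For such a solution r with x = r', stretch t = r/rho and Jacobian
   D = x t^(n-1), the "energy-momentum" quantity
     H = phi(x) + (n-1) phi(t) + h(D) - (x - t) (phi'(x) + h'(D) t^(n-1))
   satisfies the conservation law (rho^n H)' = n rho^(n-1) W, W being the stored energy.
   Comparing W with its tangent plane at (t(R), t(R), a) gives a monotone (Lyapunov-type)
   quantity on (0, R].  Letting rho -> 0 along points where rho r'(rho) -> 0 and using the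
   cavitation condition T -> 0 yields  h(a) <= h(t(R)^n)  for the mean Jacobian
   a = (r(R)^n - r(0)^n) / R^n < t(R)^n.  As h is strictly convex with h -> oo at 0, it is
   strictly decreasing near 0, so t(R) cannot be small; but t(R) < r(1)/R = lambda/R, which
   gives the contradiction for small lambda.
   The file first collects general facts of real analysis, then develops the flat radial
   problem inside the locale flat_equilibrium, and finally transfers an equilibrium solution
   of the curved problem to the flat one to prove theorem4p4. *)

lemma strictly_convex_on_imp_convex_on:
  assumes strict: "strictly_convex_on S g" and S: "convex S"
  shows "convex_on S g"
proof (intro convex_onI)
  fix t x y :: real
  assume t: "0 < t" "t < 1" and xy: "x \<in> S" "y \<in> S"
  show "g ((1 - t) *\<^sub>R x + t *\<^sub>R y) \<le> (1 - t) * g x + t * g y"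
  proof (cases "x = y")
    case True thus ?thesis by (simp add: algebra_simps)
  next
    case False
    thus ?thesis using strict xy t unfolding strictly_convex_on_def by (auto intro: less_imp_le)
  qed
qed (rule S)

lemma convex_on_tangent_below:
  fixes g :: "real \<Rightarrow> real"
  assumes "convex_on {0<..} g" "(g has_real_derivative D) (at v)" "u > 0" "v > 0"
  shows "g v + D * (u - v) \<le> g u"
proof -
  have "D * (u - v) \<le> g u - g v"
    by (rule convex_on_imp_above_tangent[where A = "{0<..}"])
       (use assms in \<open>auto simp: interior_open intro: has_field_derivative_at_within\<close>)
  thus ?thesis by simp
qed

lemma strictly_convex_decreasing_near_zero:
  fixes h :: "real \<Rightarrow> real"
  assumes conv: "strictly_convex_on {0<..} h" and blowup: "filterlim h at_top (at_right 0)"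
  shows "\<exists>v0>0. v0 \<le> 1 \<and> (\<forall>a c. 0 < a \<longrightarrow> a < c \<longrightarrow> c \<le> v0 \<longrightarrow> h c < h a)"
proof -
  have "eventually (\<lambda>v. h 1 + 1 \<le> h v) (at_right 0)"
    using blowup unfolding filterlim_at_top by blast
  then obtain b where b: "b > 0" and big: "\<And>v. 0 < v \<Longrightarrow> v < b \<Longrightarrow> h 1 + 1 \<le> h v"
    unfolding eventually_at_right_field by auto
  define v0 where "v0 = min (b/2) (1/2)"
  have v0: "v0 > 0" "v0 \<le> 1" "v0 < b" "v0 < 1" using b by (auto simp: v0_def)
  have "h c < h a" if ac: "0 < a" "a < c" "c \<le> v0" for a c
  proof -
    \<comment> \<open>c is a convex combination of a and 1, and h 1 < h a.\<close>
    define t where "t = (c - a) / (1 - a)"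
    have a1: "a < 1" using ac v0 by simp
    have t: "0 < t" "t < 1" using ac a1 v0 by (auto simp: t_def field_simps)
    have "t * (1 - a) = c - a" using a1 by (simp add: t_def)
    hence comb: "(1 - t) * a + t * 1 = c" by (simp add: algebra_simps)
    have "h ((1 - t) * a + t * 1) < (1 - t) * h a + t * h 1"
      by (rule conv[unfolded strictly_convex_on_def, rule_format]) (use ac a1 t in auto)
    moreover have "t * h 1 < t * h a" using big[of a] ac v0 t by simp
    ultimately show ?thesis unfolding comb by (simp add: algebra_simps)
  qed
  thus ?thesis using v0 by blast
qed

lemma flat_curvature_solution:
  fixes f f' \<kappa> :: "real \<Rightarrow> real" and \<epsilon> s :: real
  assumes f_deriv: "\<And>x. x \<ge> 0 \<Longrightarrow> (f has_real_derivative f' x) (at x within {0..})"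
    and f'_deriv: "\<And>x. x \<ge> 0 \<Longrightarrow> (f' has_real_derivative (- \<kappa> x * f x)) (at x within {0..})"
    and f0: "f 0 = 0" and f'0: "f' 0 = 1"
    and \<kappa>_zero: "\<And>s. 0 < s \<Longrightarrow> s < \<epsilon> \<Longrightarrow> \<kappa> s = 0"
    and s: "0 \<le> s" "s < \<epsilon>"
  shows "f s = s \<and> f' s = 1"
proof -
  have at_pos: "at y within {0..} = at y" if "y > 0" for y :: real
    using that by (intro at_within_interior) simp
  have cont_f: "continuous_on {0..} f" and cont_f': "continuous_on {0..} f'"
    using DERIV_continuous_on[of "{0..}" f f'] DERIV_continuous_on[of "{0..}" f' "\<lambda>x. - \<kappa> x * f x"]
      f_deriv f'_deriv by auto
  have f'_one: "f' y = 1" if y: "0 \<le> y" "y < \<epsilon>" for y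
  proof (cases "y = 0")
    case False
    have "f' y = f' 0"
    proof (rule DERIV_isconst_end[of 0 y f'])
      show "continuous_on {0..y} f'" using cont_f' by (rule continuous_on_subset) auto
      fix z assume z: "0 < z" "z < y"
      show "DERIV f' z :> 0"
        using f'_deriv[of z] at_pos[of z] \<kappa>_zero[of z] z y by simp
    qed (use y False in simp)
    thus ?thesis using f'0 by simp
  qed (use f'0 in simp)
  have "f s - s = f 0 - 0"
  proof (cases "s = 0")
    case False
    show ?thesis
    proof (rule DERIV_isconst_end[where f = "\<lambda>y. f y - y"])
      show "continuous_on {0..s} (\<lambda>y. f y - y)"
        using continuous_on_subset[OF cont_f, of "{0..s}"] by (intro continuous_intros) auto
      fix y assume y: "0 < y" "y < s"
      have "DERIV f y :> 1" using f_deriv[of y] at_pos[of y] f'_one[of y] y s by simp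
      thus "DERIV (\<lambda>y. f y - y) y :> 0" using DERIV_diff[OF _ DERIV_ident] by fastforce
    qed (use s False in simp)
  qed simp
  thus ?thesis using f0 f'_one s by simp
qed

lemma increasing_above_right_limit:
  fixes r r' :: "real \<Rightarrow> real"
  assumes dr: "\<And>\<rho>. 0 < \<rho> \<Longrightarrow> \<rho> < b \<Longrightarrow> (r has_real_derivative r' \<rho>) (at \<rho>)"
    and r'_pos: "\<And>\<rho>. 0 < \<rho> \<Longrightarrow> \<rho> < b \<Longrightarrow> r' \<rho> > 0"
    and cont: "continuous_on {0<..b} r"
    and lim: "(r \<longlongrightarrow> r0) (at_right 0)"
  shows increasing: "\<And>s t. 0 < s \<Longrightarrow> s < t \<Longrightarrow> t \<le> b \<Longrightarrow> r s < r t"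
    and above_limit: "\<And>s. 0 < s \<Longrightarrow> s \<le> b \<Longrightarrow> r0 < r s"
proof -
  show mono: "r s < r t" if st: "0 < s" "s < t" "t \<le> b" for s t
  proof (rule DERIV_pos_imp_increasing_open[OF st(2)])
    fix y assume "s < y" "y < t"
    thus "\<exists>d. DERIV r y :> d \<and> 0 < d" using dr r'_pos st by force
  next
    show "continuous_on {s..t} r" using st by (intro continuous_on_subset[OF cont]) auto
  qed
  show "r0 < r s" if s: "0 < s" "s \<le> b" for s
  proof -
    have "eventually (\<lambda>\<rho>. r \<rho> \<le> r (s / 2)) (at_right 0)"
      unfolding eventually_at_right_field
      using mono[of _ "s / 2"] s by (intro exI[of _ "s / 2"]) (auto intro: less_imp_le)
    hence "r0 \<le> r (s / 2)" using lim by (intro tendsto_upperbound) auto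
    also have "r (s / 2) < r s" using mono[of "s / 2" s] s by simp
    finally show ?thesis .
  qed
qed

text \<open>If r stays positive near 0 then rho r'(rho) cannot stay bounded away from 0: otherwise r would be
  bounded above by a multiple of ln rho.\<close>
lemma small_rho_times_slope:
  fixes r x :: "real \<Rightarrow> real"
  assumes d0: "d0 > 0" and c: "c > 0"
    and dr: "\<And>\<rho>. 0 < \<rho> \<Longrightarrow> \<rho> \<le> d0 \<Longrightarrow> (r has_real_derivative x \<rho>) (at \<rho>)"
    and r_pos: "\<And>\<rho>. 0 < \<rho> \<Longrightarrow> \<rho> \<le> d0 \<Longrightarrow> r \<rho> > 0"
  shows "\<exists>\<delta>. 0 < \<delta> \<and> \<delta> < d0 \<and> \<delta> * x \<delta> < c"
proof (rule ccontr)
  assume "\<not> ?thesis"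
  hence big: "\<And>\<delta>. 0 < \<delta> \<Longrightarrow> \<delta> < d0 \<Longrightarrow> c \<le> \<delta> * x \<delta>" by (meson not_less)
  define d1 where "d1 = d0 / 2"
  define \<delta> where "\<delta> = d1 * exp (- r d1 / c - 1)"
  have d1: "0 < d1" "d1 < d0" using d0 by (auto simp: d1_def)
  have "r d1 / c > 0" using r_pos[of d1] d1 c by simp
  hence "exp (- r d1 / c - 1) < 1" by simp
  hence \<delta>: "0 < \<delta>" "\<delta> < d1" using d1 by (auto simp: \<delta>_def)
  define g where "g s = r s - c * ln s" for s
  have dg: "DERIV g s :> x s - c * (1 / s)" if "0 < s" "s \<le> d1" for s
    unfolding g_def using that d1 by (intro DERIV_diff dr DERIV_cmult DERIV_ln_divide) auto
  have "g \<delta> \<le> g d1"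
  proof (rule DERIV_nonneg_imp_increasing_open[of \<delta> d1 g])
    fix s assume s: "\<delta> < s" "s < d1"
    have "c / s \<le> x s" using big[of s] s \<delta> d1 by (simp add: field_simps)
    thus "\<exists>y. DERIV g s :> y \<and> 0 \<le> y" using dg[of s] s \<delta> by auto
  next
    show "continuous_on {\<delta>..d1} g"
    proof (rule DERIV_atLeastAtMost_imp_continuous_on)
      fix s assume "\<delta> \<le> s" "s \<le> d1"
      thus "\<exists>y. DERIV g s :> y" using dg[of s] \<delta> by auto
    qed
  qed (use \<delta> in simp)
  moreover have "ln \<delta> = ln d1 + (- r d1 / c - 1)" using d1 by (simp add: \<delta>_def ln_mult)
  ultimately have "r \<delta> \<le> r d1 + c * (- r d1 / c - 1)" by (simp add: g_def algebra_simps)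
  also have "\<dots> = - c" using c by (simp add: field_simps)
  finally show False using r_pos[of \<delta>] \<delta> d1 c by simp
qed

lemma vanishing_slope_sequence:
  fixes r x :: "real \<Rightarrow> real"
  assumes d0: "d0 > 0"
    and dr: "\<And>\<rho>. 0 < \<rho> \<Longrightarrow> \<rho> \<le> d0 \<Longrightarrow> (r has_real_derivative x \<rho>) (at \<rho>)"
    and r_pos: "\<And>\<rho>. 0 < \<rho> \<Longrightarrow> \<rho> \<le> d0 \<Longrightarrow> r \<rho> > 0"
    and x_pos: "\<And>\<rho>. 0 < \<rho> \<Longrightarrow> \<rho> \<le> d0 \<Longrightarrow> x \<rho> > 0"
  shows "\<exists>\<delta>. filterlim \<delta> (at_right 0) sequentially \<and> (\<forall>k. 0 < \<delta> k \<and> \<delta> k \<le> d0)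
           \<and> ((\<lambda>k. \<delta> k * x (\<delta> k)) \<longlongrightarrow> 0) sequentially"
proof -
  have "\<exists>\<delta>. 0 < \<delta> \<and> \<delta> < min d0 (1 / Suc k) \<and> \<delta> * x \<delta> < 1 / Suc k" for k :: nat
    using small_rho_times_slope[of "min d0 (1 / Suc k)" "1 / Suc k" r x] d0 dr r_pos by auto
  then obtain \<delta> where \<delta>: "\<And>k. 0 < \<delta> k \<and> \<delta> k < min d0 (1 / Suc k) \<and> \<delta> k * x (\<delta> k) < 1 / Suc k"
    by metis
  have inv_lim: "((\<lambda>k. 1 / real (Suc k)) \<longlongrightarrow> 0) sequentially"
    using LIMSEQ_inverse_real_of_nat by (simp add: inverse_eq_divide)
  have "(\<delta> \<longlongrightarrow> 0) sequentially"
    by (rule tendsto_sandwich[OF _ _ tendsto_const inv_lim])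
       (use \<delta> in \<open>auto intro!: always_eventually intro: less_imp_le\<close>)
  hence \<delta>_lim: "filterlim \<delta> (at_right 0) sequentially"
    using \<delta> by (intro tendsto_imp_filterlim_at_right) auto
  have "0 \<le> \<delta> k * x (\<delta> k)" for k using \<delta>[of k] x_pos[of "\<delta> k"] by simp
  hence slope_lim: "((\<lambda>k. \<delta> k * x (\<delta> k)) \<longlongrightarrow> 0) sequentially"
    by (intro tendsto_sandwich[OF _ _ tendsto_const inv_lim])
       (use \<delta> in \<open>auto intro!: always_eventually intro: less_imp_le\<close>)
  show ?thesis using \<delta> \<delta>_lim slope_lim by (intro exI[of _ \<delta>]) (auto intro: less_imp_le)
qed

lemma powers_near_n:
  fixes y :: real
  assumes "n \<ge> 2"
  shows "y ^ n = y ^ (n - 1) * y" and "y ^ (n - 1) = y ^ (n - 2) * y"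
    and "y ^ (2 * (n - 1)) = (y ^ (n - 2) * y)\<^sup>2" and "y ^ (2 * n - 3) = (y ^ (n - 2))\<^sup>2 * y"
proof -
  obtain m where m: "n = Suc (Suc m)" using assms by (metis add_2_eq_Suc le_Suc_ex)
  show "y ^ n = y ^ (n - 1) * y" "y ^ (n - 1) = y ^ (n - 2) * y"
    by (simp_all add: m power_Suc2)
  show "y ^ (2 * (n - 1)) = (y ^ (n - 2) * y)\<^sup>2"
    by (simp add: m power_mult power2_eq_square power_mult_distrib)
  have "2 * n - 3 = Suc (2 * m)" by (simp add: m)
  thus "y ^ (2 * n - 3) = (y ^ (n - 2))\<^sup>2 * y"
    by (simp add: m power_mult power2_eq_square power_mult_distrib)
qed

text \<open>The algebraic core of the conservation law: after inserting the derivatives of the energy and of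
  the stress, the derivative of the energy-momentum quantity reduces, modulo the equilibrium
  equation ode, to n (x - t) S / rho (with N = n - 1, t^(n-1) = p t).\<close>
lemma energy_momentum_algebra:
  fixes \<rho> x t xx p N A B A2 H1 H2 :: real
  assumes "\<rho> > 0"
    and ode: "\<rho> * (A2 + H2 * (p * t)\<^sup>2) * xx = N * (B - A) - N * (x - t) * H2 * x * (p\<^sup>2 * t)"
  shows "(A * xx + N * B * ((x - t) / \<rho>) + H1 * (xx * (p * t) + x * (N * p * ((x - t) / \<rho>))))
     - (xx - (x - t) / \<rho>) * (A + H1 * (p * t))
     - (x - t) * (A2 * xx + H2 * (xx * (p * t) + x * (N * p * ((x - t) / \<rho>))) * (p * t)
                  + H1 * (N * p * ((x - t) / \<rho>)))
     = (N + 1) * (x - t) * (A + H1 * (p * t)) / \<rho>"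
proof -
  \<comment> \<open>The difference of both sides is a multiple of the residual of the equation ode.\<close>
  have "(A * xx + N * B * ((x - t) / \<rho>) + H1 * (xx * (p * t) + x * (N * p * ((x - t) / \<rho>))))
     - (xx - (x - t) / \<rho>) * (A + H1 * (p * t))
     - (x - t) * (A2 * xx + H2 * (xx * (p * t) + x * (N * p * ((x - t) / \<rho>))) * (p * t)
                  + H1 * (N * p * ((x - t) / \<rho>)))
     - (N + 1) * (x - t) * (A + H1 * (p * t)) / \<rho>
     = - (x - t) * (\<rho> * (A2 + H2 * (p * t)\<^sup>2) * xx
                    - (N * (B - A) - N * (x - t) * H2 * x * (p\<^sup>2 * t))) / \<rho>"
    using assms(1) by (simp add: field_simps power2_eq_square)
  thus ?thesis using ode by simp
qed

text \<open>Flat radial equilibria on (0, R]: r is the deformed radius, x = r' and xx = r''.  The last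
  assumption is the equilibrium equation for f = id, where tau = r/rho.\<close>
locale flat_equilibrium =
  fixes n :: nat and \<phi> \<phi>' \<phi>'' h h' h'' r x xx :: "real \<Rightarrow> real" and R :: real
  assumes n2: "n \<ge> 2" and R_pos: "0 < R"
    and d\<phi>: "\<And>v. v > 0 \<Longrightarrow> (\<phi> has_real_derivative \<phi>' v) (at v)"
    and d\<phi>': "\<And>v. v > 0 \<Longrightarrow> (\<phi>' has_real_derivative \<phi>'' v) (at v)"
    and dh: "\<And>v. v > 0 \<Longrightarrow> (h has_real_derivative h' v) (at v)"
    and dh': "\<And>v. v > 0 \<Longrightarrow> (h' has_real_derivative h'' v) (at v)"
    and \<phi>_conv: "convex_on {0<..} \<phi>" and h_conv: "convex_on {0<..} h"
    and \<phi>_pos: "\<And>v. v > 0 \<Longrightarrow> \<phi> v > 0"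
    and dr: "\<And>\<rho>. 0 < \<rho> \<Longrightarrow> \<rho> \<le> R \<Longrightarrow> (r has_real_derivative x \<rho>) (at \<rho>)"
    and dx: "\<And>\<rho>. 0 < \<rho> \<Longrightarrow> \<rho> \<le> R \<Longrightarrow> (x has_real_derivative xx \<rho>) (at \<rho>)"
    and x_pos: "\<And>\<rho>. 0 < \<rho> \<Longrightarrow> \<rho> \<le> R \<Longrightarrow> x \<rho> > 0"
    and r_pos: "\<And>\<rho>. 0 < \<rho> \<Longrightarrow> \<rho> \<le> R \<Longrightarrow> r \<rho> > 0"
    and ode: "\<And>\<rho>. 0 < \<rho> \<Longrightarrow> \<rho> \<le> R \<Longrightarrow>
      \<rho> * (\<phi>'' (x \<rho>) + h'' (x \<rho> * (r \<rho> / \<rho>) ^ (n - 1)) * (r \<rho> / \<rho>) ^ (2 * (n - 1))) * xx \<rho>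
      = real (n - 1) * (\<phi>' (r \<rho> / \<rho>) - \<phi>' (x \<rho>))
        - real (n - 1) * (x \<rho> - r \<rho> / \<rho>) * h'' (x \<rho> * (r \<rho> / \<rho>) ^ (n - 1)) * x \<rho>
            * (r \<rho> / \<rho>) ^ (2 * n - 3)"
begin

text \<open>Stretch, Jacobian, radial stress (divided by t^(n-1)), stored energy and the energy-momentum
  quantity of the flat problem.\<close>
definition stretch :: "real \<Rightarrow> real" where "stretch \<rho> = r \<rho> / \<rho>"
definition jacobian :: "real \<Rightarrow> real" where "jacobian \<rho> = x \<rho> * stretch \<rho> ^ (n - 1)"
definition stress :: "real \<Rightarrow> real" where "stress \<rho> = \<phi>' (x \<rho>) + h' (jacobian \<rho>) * stretch \<rho> ^ (n - 1)"
definition energy :: "real \<Rightarrow> real" where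
  "energy \<rho> = \<phi> (x \<rho>) + real (n - 1) * \<phi> (stretch \<rho>) + h (jacobian \<rho>)"
definition hamiltonian :: "real \<Rightarrow> real" where
  "hamiltonian \<rho> = energy \<rho> - (x \<rho> - stretch \<rho>) * stress \<rho>"

lemma stretch_pos: "0 < \<rho> \<Longrightarrow> \<rho> \<le> R \<Longrightarrow> stretch \<rho> > 0"
  using r_pos by (simp add: stretch_def)

lemma jacobian_pos: "0 < \<rho> \<Longrightarrow> \<rho> \<le> R \<Longrightarrow> jacobian \<rho> > 0"
  using x_pos stretch_pos by (simp add: jacobian_def)

lemma stretch_deriv:
  assumes \<rho>: "0 < \<rho>" "\<rho> \<le> R"
  shows "(stretch has_real_derivative (x \<rho> - stretch \<rho>) / \<rho>) (at \<rho>)"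
  unfolding stretch_def[abs_def]
  using DERIV_divide[OF dr[OF \<rho>] DERIV_ident] \<rho> by (simp add: field_simps power2_eq_square)

lemma stretch_power_deriv:
  assumes \<rho>: "0 < \<rho>" "\<rho> \<le> R"
  shows "((\<lambda>\<rho>. stretch \<rho> ^ (n - 1)) has_real_derivative
           real (n - 1) * stretch \<rho> ^ (n - 2) * ((x \<rho> - stretch \<rho>) / \<rho>)) (at \<rho>)"
  using DERIV_power[OF stretch_deriv[OF \<rho>], of "n - 1"] by (simp add: numeral_2_eq_2 mult_ac)

lemma jacobian_deriv:
  assumes \<rho>: "0 < \<rho>" "\<rho> \<le> R"
  shows "(jacobian has_real_derivative xx \<rho> * stretch \<rho> ^ (n - 1)
           + x \<rho> * (real (n - 1) * stretch \<rho> ^ (n - 2) * ((x \<rho> - stretch \<rho>) / \<rho>))) (at \<rho>)"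
  unfolding jacobian_def[abs_def]
  using DERIV_mult'[OF dx[OF \<rho>] stretch_power_deriv[OF \<rho>]] by (simp add: add.commute)

lemma hamiltonian_deriv:
  assumes \<rho>: "0 < \<rho>" "\<rho> \<le> R"
  shows "(hamiltonian has_real_derivative real n * (x \<rho> - stretch \<rho>) * stress \<rho> / \<rho>) (at \<rho>)"
proof -
  define t where "t = stretch \<rho>"
  define t' where "t' = (x \<rho> - t) / \<rho>"
  define p where "p = t ^ (n - 2)"
  define N where "N = real (n - 1)"
  have tp: "t ^ (n - 1) = p * t" using powers_near_n(2)[OF n2] by (simp add: p_def)
  hence tp': "stretch \<rho> ^ (n - Suc 0) = p * stretch \<rho>" by (simp add: t_def)
  have d_t: "(stretch has_real_derivative t') (at \<rho>)"
    using stretch_deriv[OF \<rho>] by (simp add: t'_def t_def)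
  have d_tp: "((\<lambda>\<rho>. stretch \<rho> ^ (n - 1)) has_real_derivative N * p * t') (at \<rho>)"
    using stretch_power_deriv[OF \<rho>] by (simp add: N_def p_def t'_def t_def)
  have d_jac: "(jacobian has_real_derivative xx \<rho> * (p * t) + x \<rho> * (N * p * t')) (at \<rho>)"
    using jacobian_deriv[OF \<rho>] by (simp add: N_def p_def t'_def t_def tp')
  have jp: "jacobian \<rho> > 0" using jacobian_pos[OF \<rho>] .
  have d_energy: "(energy has_real_derivative
      \<phi>' (x \<rho>) * xx \<rho> + N * \<phi>' t * t' + h' (jacobian \<rho>) * (xx \<rho> * (p * t) + x \<rho> * (N * p * t'))) (at \<rho>)"
    using DERIV_add[OF DERIV_add[OF DERIV_chain2[OF d\<phi>[OF x_pos[OF \<rho>]] dx[OF \<rho>]]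
            DERIV_cmult[OF DERIV_chain2[OF d\<phi>[OF stretch_pos[OF \<rho>]] d_t], of N]]
          DERIV_chain2[OF dh[OF jp] d_jac]]
    unfolding energy_def[abs_def] N_def t_def by (simp add: mult_ac)
  have d_stress: "(stress has_real_derivative
      \<phi>'' (x \<rho>) * xx \<rho> + h'' (jacobian \<rho>) * (xx \<rho> * (p * t) + x \<rho> * (N * p * t')) * (p * t)
      + h' (jacobian \<rho>) * (N * p * t')) (at \<rho>)"
    using DERIV_add[OF DERIV_chain2[OF d\<phi>'[OF x_pos[OF \<rho>]] dx[OF \<rho>]]
                       DERIV_mult'[OF DERIV_chain2[OF dh'[OF jp] d_jac] d_tp]]
    unfolding stress_def[abs_def] t_def by (simp add: tp' algebra_simps)
  have d_ham: "(hamiltonian has_real_derivative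
      (\<phi>' (x \<rho>) * xx \<rho> + N * \<phi>' t * t' + h' (jacobian \<rho>) * (xx \<rho> * (p * t) + x \<rho> * (N * p * t')))
      - (xx \<rho> - t') * stress \<rho>
      - (x \<rho> - t) * (\<phi>'' (x \<rho>) * xx \<rho> + h'' (jacobian \<rho>) * (xx \<rho> * (p * t) + x \<rho> * (N * p * t')) * (p * t)
                      + h' (jacobian \<rho>) * (N * p * t'))) (at \<rho>)"
    using DERIV_diff[OF d_energy DERIV_mult'[OF DERIV_diff[OF dx[OF \<rho>] d_t] d_stress]]
    unfolding hamiltonian_def[abs_def] t_def by (simp add: diff_diff_eq add.commute)
  have ode': "\<rho> * (\<phi>'' (x \<rho>) + h'' (jacobian \<rho>) * (p * t)\<^sup>2) * xx \<rho>
      = N * (\<phi>' t - \<phi>' (x \<rho>)) - N * (x \<rho> - t) * h'' (jacobian \<rho>) * x \<rho> * (p\<^sup>2 * t)"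
    using ode[OF \<rho>] powers_near_n(3,4)[OF n2, of t] tp
    by (simp add: jacobian_def stretch_def t_def p_def N_def)
  show ?thesis
    using d_ham energy_momentum_algebra[OF \<rho>(1) ode'] n2
    by (simp add: t'_def stress_def tp' t_def N_def)
qed

lemma scaled_hamiltonian_deriv:
  assumes \<rho>: "0 < \<rho>" "\<rho> \<le> R"
  shows "((\<lambda>\<rho>. \<rho> ^ n * hamiltonian \<rho>) has_real_derivative real n * \<rho> ^ (n - 1) * energy \<rho>) (at \<rho>)"
proof -
  have "\<rho> ^ n = \<rho> ^ (n - 1) * \<rho>" using powers_near_n(1)[OF n2] .
  hence "real n * \<rho> ^ (n - 1) * hamiltonian \<rho> + \<rho> ^ n * (real n * (x \<rho> - stretch \<rho>) * stress \<rho> / \<rho>)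
      = real n * \<rho> ^ (n - 1) * energy \<rho>"
    using \<rho> by (simp add: hamiltonian_def field_simps)
  thus ?thesis using DERIV_mult'[OF DERIV_pow[of n] hamiltonian_deriv[OF \<rho>]] by (simp add: add.commute)
qed

text \<open>The tangent plane of the stored energy at principal stretches t(R) and Jacobian a, evaluated at rho.\<close>
definition tangent_energy :: "real \<Rightarrow> real \<Rightarrow> real" where
  "tangent_energy a \<rho> = real n * \<phi> (stretch R)
     + \<phi>' (stretch R) * (x \<rho> + real (n - 1) * stretch \<rho> - real n * stretch R)
     + h a + h' a * (jacobian \<rho> - a)"

lemma energy_above_tangent:
  assumes a: "a > 0" and \<rho>: "0 < \<rho>" "\<rho> \<le> R"
  shows "tangent_energy a \<rho> \<le> energy \<rho>"
proof -
  have \<tau>: "stretch R > 0" using stretch_pos R_pos by simp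
  have "\<phi> (stretch R) + \<phi>' (stretch R) * (x \<rho> - stretch R) \<le> \<phi> (x \<rho>)"
    using convex_on_tangent_below[OF \<phi>_conv d\<phi>[OF \<tau>] x_pos[OF \<rho>] \<tau>] .
  moreover have "\<phi> (stretch R) + \<phi>' (stretch R) * (stretch \<rho> - stretch R) \<le> \<phi> (stretch \<rho>)"
    using convex_on_tangent_below[OF \<phi>_conv d\<phi>[OF \<tau>] stretch_pos[OF \<rho>] \<tau>] .
  hence "real (n - 1) * (\<phi> (stretch R) + \<phi>' (stretch R) * (stretch \<rho> - stretch R))
      \<le> real (n - 1) * \<phi> (stretch \<rho>)"
    by (rule mult_left_mono) simp
  moreover have "h a + h' a * (jacobian \<rho> - a) \<le> h (jacobian \<rho>)"
    using convex_on_tangent_below[OF h_conv dh[OF a] jacobian_pos[OF \<rho>] a] .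
  moreover have "tangent_energy a \<rho> = (\<phi> (stretch R) + \<phi>' (stretch R) * (x \<rho> - stretch R))
      + real (n - 1) * (\<phi> (stretch R) + \<phi>' (stretch R) * (stretch \<rho> - stretch R))
      + (h a + h' a * (jacobian \<rho> - a))"
    unfolding tangent_energy_def using n2 by (simp add: of_nat_diff algebra_simps)
  ultimately show ?thesis unfolding energy_def by linarith
qed

text \<open>A primitive of n rho^(n-1) times the tangent energy.\<close>
definition comparison :: "real \<Rightarrow> real \<Rightarrow> real" where
  "comparison a \<rho> =
     (real n * \<phi> (stretch R) - real n * stretch R * \<phi>' (stretch R) + h a - a * h' a) * \<rho> ^ n
     + real n * \<phi>' (stretch R) * (\<rho> ^ (n - 1) * r \<rho>) + h' a * r \<rho> ^ n"

lemma comparison_deriv: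
  assumes \<rho>: "0 < \<rho>" "\<rho> \<le> R"
  shows "(comparison a has_real_derivative real n * \<rho> ^ (n - 1) * tangent_energy a \<rho>) (at \<rho>)"
proof -
  have pow: "\<rho> ^ (n - 1) = \<rho> ^ (n - 2) * \<rho>" using powers_near_n(2)[OF n2] .
  have r_eq: "r \<rho> = stretch \<rho> * \<rho>" using \<rho> by (simp add: stretch_def)
  have rn: "r \<rho> ^ (n - Suc 0) = \<rho> ^ (n - Suc 0) * stretch \<rho> ^ (n - Suc 0)"
    by (simp add: r_eq power_mult_distrib)
  have d1: "((\<lambda>\<rho>. \<rho> ^ (n - 1) * r \<rho>) has_real_derivative
      \<rho> ^ (n - 1) * (x \<rho> + real (n - 1) * stretch \<rho>)) (at \<rho>)"
  proof -
    have "n - 1 - Suc 0 = n - 2" by simp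
    hence e: "real (n - 1) * \<rho> ^ (n - 1 - Suc 0) * r \<rho> = real (n - 1) * (\<rho> ^ (n - 1) * stretch \<rho>)"
      unfolding r_eq pow by (simp add: mult_ac)
    show ?thesis
      by (rule DERIV_cong[OF DERIV_mult'[OF DERIV_pow[of "n - 1"] dr[OF \<rho>]]])
         (subst e, simp add: algebra_simps)
  qed
  have d2: "((\<lambda>\<rho>. r \<rho> ^ n) has_real_derivative real n * \<rho> ^ (n - 1) * jacobian \<rho>) (at \<rho>)"
    using DERIV_power[OF dr[OF \<rho>], of n] by (simp add: jacobian_def rn algebra_simps)
  show ?thesis
    unfolding comparison_def[abs_def]
    by (rule DERIV_cong[OF DERIV_add[OF DERIV_add[OF DERIV_cmult[OF DERIV_pow[of n]]
          DERIV_cmult[OF d1]] DERIV_cmult[OF d2]]])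
       (simp add: tangent_energy_def algebra_simps)
qed

definition lyapunov :: "real \<Rightarrow> real \<Rightarrow> real" where
  "lyapunov a \<rho> = \<rho> ^ n * hamiltonian \<rho> - comparison a \<rho>"

text \<open>Its derivative is n rho^(n-1) (W - tangent energy) >= 0, so it is nondecreasing on (0, R].\<close>
lemma lyapunov_mono:
  assumes a: "a > 0" and \<delta>: "0 < \<delta>" "\<delta> \<le> R"
  shows "lyapunov a \<delta> \<le> lyapunov a R"
proof -
  have d: "(lyapunov a has_real_derivative real n * \<rho> ^ (n - 1) * (energy \<rho> - tangent_energy a \<rho>)) (at \<rho>)"
    if "0 < \<rho>" "\<rho> \<le> R" for \<rho>
    using DERIV_diff[OF scaled_hamiltonian_deriv[OF that] comparison_deriv[OF that]]
    unfolding lyapunov_def[abs_def] right_diff_distrib .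
  have nonneg: "0 \<le> real n * \<rho> ^ (n - 1) * (energy \<rho> - tangent_energy a \<rho>)"
    if "0 < \<rho>" "\<rho> \<le> R" for \<rho>
    using energy_above_tangent[OF a that] that by simp
  show ?thesis
  proof (rule DERIV_nonneg_imp_increasing_open[OF \<delta>(2)])
    fix s assume "\<delta> < s" "s < R"
    hence "0 < s" "s \<le> R" using \<delta> by auto
    thus "\<exists>y. DERIV (lyapunov a) s :> y \<and> 0 \<le> y" using d nonneg by blast
  next
    show "continuous_on {\<delta>..R} (lyapunov a)"
    proof (rule DERIV_atLeastAtMost_imp_continuous_on)
      fix s assume "\<delta> \<le> s" "s \<le> R"
      thus "\<exists>y. DERIV (lyapunov a) s :> y" using d[of s] \<delta> by auto
    qed
  qed
qed

text \<open>The value at R: with a the mean Jacobian, the term h'(a) (a R^n - r(R)^n) becomes - h'(a) r(0)^n.\<close>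
lemma lyapunov_at_R:
  "lyapunov a R = R ^ n * (hamiltonian R - real n * \<phi> (stretch R) - h a) + h' a * (a * R ^ n - r R ^ n)"
proof -
  have "R ^ (n - 1) * r R = stretch R * R ^ n"
    using R_pos powers_near_n(1)[OF n2, of R] by (simp add: stretch_def)
  thus ?thesis unfolding lyapunov_def comparison_def by (simp add: algebra_simps)
qed

text \<open>Lower bound near the centre, using W >= h(D) >= h(1) + h'(1) (D - 1).\<close>
lemma lyapunov_lower_bound:
  assumes \<delta>: "0 < \<delta>" "\<delta> \<le> R"
  shows "\<delta> ^ n * (h 1 - h' 1) + r \<delta> * (\<delta> ^ (n - 1) * stress \<delta>) - comparison a \<delta>
           + \<delta> * x \<delta> * (h' 1 * r \<delta> ^ (n - 1) - \<delta> ^ (n - 1) * stress \<delta>)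
         \<le> lyapunov a \<delta>"
proof -
  have pow: "\<delta> ^ n = \<delta> ^ (n - 1) * \<delta>" using powers_near_n(1)[OF n2] .
  have "h 1 + h' 1 * (jacobian \<delta> - 1) \<le> h (jacobian \<delta>)"
    using convex_on_tangent_below[OF h_conv dh jacobian_pos[OF \<delta>]] by simp
  moreover have "0 < \<phi> (x \<delta>)" "0 \<le> real (n - 1) * \<phi> (stretch \<delta>)"
    using \<phi>_pos x_pos[OF \<delta>] \<phi>_pos[OF stretch_pos[OF \<delta>]] by auto
  ultimately have "h 1 + h' 1 * (jacobian \<delta> - 1) \<le> energy \<delta>" unfolding energy_def by linarith
  hence "\<delta> ^ n * (h 1 + h' 1 * (jacobian \<delta> - 1)) \<le> \<delta> ^ n * energy \<delta>" using \<delta> by simp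
  moreover have "\<delta> ^ n * jacobian \<delta> = \<delta> * x \<delta> * r \<delta> ^ (n - 1)"
    using \<delta> pow by (simp add: jacobian_def stretch_def power_divide)
  moreover have "\<delta> ^ n * hamiltonian \<delta>
      = \<delta> ^ n * energy \<delta> - \<delta> * x \<delta> * (\<delta> ^ (n - 1) * stress \<delta>) + r \<delta> * (\<delta> ^ (n - 1) * stress \<delta>)"
    unfolding hamiltonian_def stretch_def[of \<delta>] pow using \<delta> by (simp add: field_simps)
  ultimately show ?thesis unfolding lyapunov_def by (simp add: algebra_simps)
qed

text \<open>By convexity, H(R) is bounded by the energy of the homogeneous deformation with stretch t(R).\<close>
lemma hamiltonian_at_R_upper: "hamiltonian R \<le> real n * \<phi> (stretch R) + h (stretch R ^ n)"
proof -
  define \<tau> where "\<tau> = stretch R"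
  have \<tau>: "\<tau> > 0" and x: "x R > 0" and j: "jacobian R > 0"
    using stretch_pos x_pos jacobian_pos R_pos by (auto simp: \<tau>_def)
  have "\<phi> (x R) + \<phi>' (x R) * (\<tau> - x R) \<le> \<phi> \<tau>"
    using convex_on_tangent_below[OF \<phi>_conv d\<phi>[OF x] \<tau> x] .
  moreover have "\<tau> ^ n - jacobian R = \<tau> ^ (n - 1) * (\<tau> - x R)"
    using powers_near_n(1)[OF n2, of \<tau>] by (simp add: jacobian_def \<tau>_def algebra_simps)
  hence "h (jacobian R) + h' (jacobian R) * (\<tau> ^ (n - 1) * (\<tau> - x R)) \<le> h (\<tau> ^ n)"
    using convex_on_tangent_below[OF h_conv dh[OF j] _ j, of "\<tau> ^ n"] \<tau> by simp
  moreover have "real n * \<phi> \<tau> + h (\<tau> ^ n) - hamiltonian R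
      = (\<phi> \<tau> - (\<phi> (x R) + \<phi>' (x R) * (\<tau> - x R)))
        + (h (\<tau> ^ n) - (h (jacobian R) + h' (jacobian R) * (\<tau> ^ (n - 1) * (\<tau> - x R))))"
    unfolding hamiltonian_def energy_def stress_def \<tau>_def[symmetric]
    using n2 by (simp add: of_nat_diff algebra_simps)
  ultimately show ?thesis unfolding \<tau>_def by linarith
qed

text \<open>From here on the solution cavitates: r(0+) = r0 > 0 and the radial Cauchy stress
  t^(n-1) S tends to 0 at the centre.\<close>
context
  fixes r0 :: real
  assumes r_lim: "(r \<longlongrightarrow> r0) (at_right 0)" and r0_pos: "r0 > 0"
    and stress_lim: "((\<lambda>\<rho>. stretch \<rho> ^ (n - 1) * stress \<rho>) \<longlongrightarrow> 0) (at_right 0)"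
begin

text \<open>Hence rho^(n-1) S -> 0 as well, since rho^(n-1) S = rho^(2(n-1)) t^(n-1) S / r^(n-1).\<close>
lemma scaled_stress_lim: "((\<lambda>\<rho>. \<rho> ^ (n - 1) * stress \<rho>) \<longlongrightarrow> 0) (at_right 0)"
proof -
  have "((\<lambda>\<rho>. \<rho> ^ (2 * (n - 1)) * (stretch \<rho> ^ (n - 1) * stress \<rho>) / r \<rho> ^ (n - 1))
        \<longlongrightarrow> 0 ^ (2 * (n - 1)) * 0 / r0 ^ (n - 1)) (at_right 0)"
    using r0_pos by (intro tendsto_intros stress_lim r_lim) auto
  hence "((\<lambda>\<rho>. \<rho> ^ (2 * (n - 1)) * (stretch \<rho> ^ (n - 1) * stress \<rho>) / r \<rho> ^ (n - 1))
        \<longlongrightarrow> 0) (at_right 0)" by simp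
  moreover have "eventually (\<lambda>\<rho>. \<rho> ^ (2 * (n - 1)) * (stretch \<rho> ^ (n - 1) * stress \<rho>) / r \<rho> ^ (n - 1)
      = \<rho> ^ (n - 1) * stress \<rho>) (at_right 0)"
    unfolding eventually_at_right_field
  proof (intro exI[of _ R] conjI allI impI)
    fix \<rho> :: real assume "0 < \<rho>" "\<rho> < R"
    thus "\<rho> ^ (2 * (n - 1)) * (stretch \<rho> ^ (n - 1) * stress \<rho>) / r \<rho> ^ (n - 1) = \<rho> ^ (n - 1) * stress \<rho>"
      using r_pos[of \<rho>] by (simp add: stretch_def power_divide power_mult power2_eq_square field_simps)
  qed (rule R_pos)
  ultimately show ?thesis by (rule Lim_transform_eventually)
qed

text \<open>Letting rho -> 0 along points with rho r'(rho) -> 0 in the lower bound.\<close>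
lemma lyapunov_at_R_lower:
  assumes a: "a > 0"
  shows "- (h' a * r0 ^ n) \<le> lyapunov a R"
proof -
  define low where "low \<delta> = \<delta> ^ n * (h 1 - h' 1) + r \<delta> * (\<delta> ^ (n - 1) * stress \<delta>) - comparison a \<delta>"
    for \<delta>
  define coef where "coef \<delta> = h' 1 * r \<delta> ^ (n - 1) - \<delta> ^ (n - 1) * stress \<delta>" for \<delta>
  have zero_pow: "((\<lambda>\<delta>::real. \<delta> ^ k) \<longlongrightarrow> 0) (at_right 0)" if "k > 0" for k
    using tendsto_power[OF tendsto_ident_at, of 0 k "{0<..}"] that by simp
  define C where "C = real n * \<phi> (stretch R) - real n * stretch R * \<phi>' (stretch R) + h a - a * h' a"
  have "(low \<longlongrightarrow> 0 * (h 1 - h' 1) + r0 * 0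
         - (C * 0 + real n * \<phi>' (stretch R) * (0 * r0) + h' a * r0 ^ n)) (at_right 0)"
    unfolding low_def comparison_def C_def[symmetric]
    using n2 by (intro tendsto_intros zero_pow scaled_stress_lim r_lim) auto
  hence low_lim: "(low \<longlongrightarrow> - (h' a * r0 ^ n)) (at_right 0)" by simp
  have coef_lim: "(coef \<longlongrightarrow> h' 1 * r0 ^ (n - 1) - 0) (at_right 0)"
    unfolding coef_def by (intro tendsto_intros scaled_stress_lim r_lim)
  obtain \<delta> where \<delta>_lim: "filterlim \<delta> (at_right 0) sequentially"
    and \<delta>: "\<And>k. 0 < \<delta> k \<and> \<delta> k \<le> R"
    and slope: "((\<lambda>k. \<delta> k * x (\<delta> k)) \<longlongrightarrow> 0) sequentially"
    using vanishing_slope_sequence[OF R_pos dr r_pos x_pos] by blast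
  have "((\<lambda>k. low (\<delta> k) + \<delta> k * x (\<delta> k) * coef (\<delta> k))
      \<longlongrightarrow> - (h' a * r0 ^ n) + 0 * (h' 1 * r0 ^ (n - 1) - 0)) sequentially"
    by (intro tendsto_intros slope filterlim_compose[OF low_lim \<delta>_lim]
        filterlim_compose[OF coef_lim \<delta>_lim])
  moreover have "low (\<delta> k) + \<delta> k * x (\<delta> k) * coef (\<delta> k) \<le> lyapunov a R" for k
    using lyapunov_lower_bound[of "\<delta> k" a] lyapunov_mono[OF a, of "\<delta> k"] \<delta>[of k]
    unfolding low_def coef_def by (simp add: mult.assoc)
  ultimately show ?thesis by (intro tendsto_upperbound) auto
qed

lemma r0_below_r: "r0 < r R"
proof -
  have "(r has_real_derivative x \<rho>) (at \<rho> within {0<..R})" if "\<rho> \<in> {0<..R}" for \<rho>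
    using dr that by (auto intro: has_field_derivative_at_within)
  hence "continuous_on {0<..R} r" by (rule DERIV_continuous_on)
  thus ?thesis
    using increasing_above_right_limit(2)[of R r x, OF dr x_pos _ r_lim] R_pos by auto
qed

lemma hamiltonian_at_R_lower:
  assumes a_def: "a = (r R ^ n - r0 ^ n) / R ^ n" and a: "a > 0"
  shows "real n * \<phi> (stretch R) + h a \<le> hamiltonian R"
proof -
  have "a * R ^ n - r R ^ n = - (r0 ^ n)" using R_pos by (simp add: a_def)
  hence "- (h' a * r0 ^ n) \<le> R ^ n * (hamiltonian R - real n * \<phi> (stretch R) - h a) - h' a * r0 ^ n"
    using lyapunov_at_R_lower[OF a] lyapunov_at_R[of a] by simp
  hence "0 \<le> R ^ n * (hamiltonian R - real n * \<phi> (stretch R) - h a)" by simp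
  thus ?thesis using zero_less_power[OF R_pos, of n] by (simp add: zero_le_mult_iff)
qed

text \<open>The two bounds on H(R) give the key inequality h(a) <= h(t(R)^n) for the mean Jacobian a.
  Consequently the stretch at R cannot lie in an interval (0, v0] on which h is decreasing:
  there a < t(R)^n <= t(R) would force h(a) > h(t(R)^n).\<close>
lemma stretch_bounded_below:
  assumes v0: "v0 \<le> 1" and h_decr: "\<And>a c. 0 < a \<Longrightarrow> a < c \<Longrightarrow> c \<le> v0 \<Longrightarrow> h c < h a"
  shows "v0 \<le> stretch R"
proof (rule ccontr)
  assume "\<not> v0 \<le> stretch R"
  hence q: "0 < stretch R" "stretch R < v0" using stretch_pos R_pos by auto
  define a where "a = (r R ^ n - r0 ^ n) / R ^ n"
  have "stretch R ^ n \<le> stretch R" using power_decreasing[of 1 n "stretch R"] n2 q v0 by simp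
  moreover have a: "0 < a" "a < stretch R ^ n"
  proof -
    have "0 < r0 ^ n" "r0 ^ n < r R ^ n" using r0_below_r r0_pos n2 by (auto intro: power_strict_mono)
    thus "0 < a" "a < stretch R ^ n"
      using R_pos by (auto simp: a_def stretch_def power_divide divide_strict_right_mono)
  qed
  ultimately have "h (stretch R ^ n) < h a" using h_decr q by simp
  moreover have "h a \<le> h (stretch R ^ n)"
    using hamiltonian_at_R_lower[OF a_def a(1)] hamiltonian_at_R_upper by simp
  ultimately show False by simp
qed

end

end

lemma equilibrium_profile_bounds:
  assumes eq: "equilibrium_solution n f f' \<phi>' \<phi>'' h' h'' lam r r' r'' r0"
  shows "\<And>\<rho>. 0 < \<rho> \<Longrightarrow> \<rho> \<le> 1 \<Longrightarrow> r0 < r \<rho>"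
    and "\<And>\<rho>. 0 < \<rho> \<Longrightarrow> \<rho> < 1 \<Longrightarrow> r \<rho> < lam"
proof -
  have dr: "\<And>\<rho>. \<rho> \<in> {0<..1} \<Longrightarrow> (r has_real_derivative r' \<rho>) (at \<rho> within {0<..1})"
    and r'_pos: "\<And>\<rho>. \<rho> \<in> {0<..1} \<Longrightarrow> r' \<rho> > 0"
    and lim: "(r \<longlongrightarrow> r0) (at_right 0)" and r1: "r 1 = lam"
    using eq unfolding equilibrium_solution_def by auto
  have dr_at: "(r has_real_derivative r' \<rho>) (at \<rho>)" if "0 < \<rho>" "\<rho> < 1" for \<rho>
    using dr[of \<rho>] that at_within_interior[of \<rho> "{0<..1}"] by simp
  have r'_pos_at: "r' \<rho> > 0" if "0 < \<rho>" "\<rho> < 1" for \<rho> using r'_pos that by simp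
  have "continuous_on {0<..1} r" using dr by (rule DERIV_continuous_on)
  note bounds = increasing_above_right_limit[of 1 r r', OF dr_at r'_pos_at this lim]
  show "\<And>\<rho>. 0 < \<rho> \<Longrightarrow> \<rho> \<le> 1 \<Longrightarrow> r0 < r \<rho>" by (rule bounds(2))
  show "\<And>\<rho>. 0 < \<rho> \<Longrightarrow> \<rho> < 1 \<Longrightarrow> r \<rho> < lam" using bounds(1)[of _ 1] r1 by simp
qed

text \<open>Near the centre both the reference radius rho and the deformed radius r(rho) lie in the
  region where kappa vanishes, so f is the identity there and tau = r/rho.\<close>
lemma equilibrium_in_flat_region:
  fixes n :: nat and \<kappa> f f' r :: "real \<Rightarrow> real"
  assumes f_deriv: "\<And>x. x \<ge> 0 \<Longrightarrow> (f has_real_derivative f' x) (at x within {0..})"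
    and f'_deriv: "\<And>x. x \<ge> 0 \<Longrightarrow> (f' has_real_derivative (- \<kappa> x * f x)) (at x within {0..})"
    and f0: "f 0 = 0" and f'0: "f' 0 = 1"
    and \<kappa>_zero: "\<And>s. 0 < s \<Longrightarrow> s < \<epsilon> \<Longrightarrow> \<kappa> s = 0"
    and R: "R < \<epsilon>" "\<epsilon> \<le> 1" and lam: "lam \<le> \<epsilon>"
    and eq: "equilibrium_solution n f f' \<phi>' \<phi>'' h' h'' lam r r' r'' r0" and r0: "r0 > 0"
    and \<rho>: "0 < \<rho>" "\<rho> \<le> R"
  shows "f \<rho> = \<rho> \<and> f' \<rho> = 1 \<and> f (r \<rho>) = r \<rho> \<and> f' (r \<rho>) = 1 \<and> tau f r \<rho> = r \<rho> / \<rho>"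
proof -
  have "r0 < r \<rho>" "r \<rho> < \<epsilon>" using equilibrium_profile_bounds[OF eq, of \<rho>] \<rho> R lam by auto
  hence "f \<rho> = \<rho> \<and> f' \<rho> = 1" "f (r \<rho>) = r \<rho> \<and> f' (r \<rho>) = 1"
    using flat_curvature_solution[OF f_deriv f'_deriv f0 f'0 \<kappa>_zero] r0 \<rho> R by auto
  thus ?thesis by (simp add: tau_def)
qed

lemma cavitating_equilibrium_flat_near_center:
  fixes n :: nat and \<kappa> f f' \<phi> \<phi>' \<phi>'' h h' h'' r r' r'' :: "real \<Rightarrow> real"
  assumes n2: "n \<ge> 2"
    and f_deriv: "\<And>x. x \<ge> 0 \<Longrightarrow> (f has_real_derivative f' x) (at x within {0..})"
    and f'_deriv: "\<And>x. x \<ge> 0 \<Longrightarrow> (f' has_real_derivative (- \<kappa> x * f x)) (at x within {0..})"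
    and f0: "f 0 = 0" and f'0: "f' 0 = 1"
    and \<kappa>_zero: "\<And>s. 0 < s \<Longrightarrow> s < \<epsilon> \<Longrightarrow> \<kappa> s = 0"
    and R: "0 < R" "R < \<epsilon>" "\<epsilon> \<le> 1" and lam: "lam \<le> \<epsilon>"
    and d\<phi>: "\<And>v. v > 0 \<Longrightarrow> (\<phi> has_real_derivative \<phi>' v) (at v)"
    and d\<phi>': "\<And>v. v > 0 \<Longrightarrow> (\<phi>' has_real_derivative \<phi>'' v) (at v)"
    and dh: "\<And>v. v > 0 \<Longrightarrow> (h has_real_derivative h' v) (at v)"
    and dh': "\<And>v. v > 0 \<Longrightarrow> (h' has_real_derivative h'' v) (at v)"
    and \<phi>_conv: "convex_on {0<..} \<phi>" and h_conv: "convex_on {0<..} h"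
    and \<phi>_pos: "\<And>v. v > 0 \<Longrightarrow> \<phi> v > 0"
    and eq: "equilibrium_solution n f f' \<phi>' \<phi>'' h' h'' lam r r' r'' r0"
    and cav: "cavitating n f \<phi>' h' r r' r0"
  shows "flat_equilibrium n \<phi> \<phi>' \<phi>'' h h' h'' r r' r'' R"
    and "(r \<longlongrightarrow> r0) (at_right 0)" and "r0 > 0"
    and "((\<lambda>\<rho>. (r \<rho> / \<rho>) ^ (n - 1) * (\<phi>' (r' \<rho>) + h' (r' \<rho> * (r \<rho> / \<rho>) ^ (n - 1)) * (r \<rho> / \<rho>) ^ (n - 1)))
           \<longlongrightarrow> 0) (at_right 0)"
proof -
  note E = eq[unfolded equilibrium_solution_def]
  show r_lim: "(r \<longlongrightarrow> r0) (at_right 0)" using E by blast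
  show r0_pos: "r0 > 0" using cav unfolding cavitating_def by simp
  have T_lim: "(T_fun n f \<phi>' h' r r' \<longlongrightarrow> 0) (at_right 0)" using cav unfolding cavitating_def by simp
  have flat: "f \<rho> = \<rho> \<and> f' \<rho> = 1 \<and> f (r \<rho>) = r \<rho> \<and> f' (r \<rho>) = 1 \<and> tau f r \<rho> = r \<rho> / \<rho>"
    if "0 < \<rho>" "\<rho> \<le> R" for \<rho>
    by (rule equilibrium_in_flat_region[OF f_deriv f'_deriv f0 f'0 \<kappa>_zero R(2,3) lam eq r0_pos that])
  have ode: "f \<rho> * (\<phi>'' (r' \<rho>) + h'' (r' \<rho> * tau f r \<rho> ^ (n - 1)) * tau f r \<rho> ^ (2 * (n - 1))) * r'' \<rho>
      = real (n - 1) * (f' (r \<rho>) * \<phi>' (tau f r \<rho>) - f' \<rho> * \<phi>' (r' \<rho>))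
        - real (n - 1) * (f' (r \<rho>) * r' \<rho> - f' \<rho> * tau f r \<rho>)
            * h'' (r' \<rho> * tau f r \<rho> ^ (n - 1)) * r' \<rho> * tau f r \<rho> ^ (2 * n - 3)"
    if "\<rho> \<in> {0<..<1}" for \<rho>
    using E that by blast
  show "flat_equilibrium n \<phi> \<phi>' \<phi>'' h h' h'' r r' r'' R"
  proof
    fix \<rho> assume \<rho>: "0 < \<rho>" "\<rho> \<le> R"
    hence \<rho>1: "\<rho> \<in> {0<..<1}" using R by auto
    have "(r has_real_derivative r' \<rho>) (at \<rho> within {0<..1})" using E \<rho>1 by auto
    moreover have "at \<rho> within {0<..1} = at \<rho>" using \<rho>1 by (intro at_within_interior) auto
    ultimately show "(r has_real_derivative r' \<rho>) (at \<rho>)" by simp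
    show "(r' has_real_derivative r'' \<rho>) (at \<rho>)" "r' \<rho> > 0" using E \<rho>1 by auto
    show "r \<rho> > 0" using equilibrium_profile_bounds(1)[OF eq, of \<rho>] r0_pos \<rho> R by simp
    show "\<rho> * (\<phi>'' (r' \<rho>) + h'' (r' \<rho> * (r \<rho> / \<rho>) ^ (n - 1)) * (r \<rho> / \<rho>) ^ (2 * (n - 1))) * r'' \<rho>
      = real (n - 1) * (\<phi>' (r \<rho> / \<rho>) - \<phi>' (r' \<rho>))
        - real (n - 1) * (r' \<rho> - r \<rho> / \<rho>) * h'' (r' \<rho> * (r \<rho> / \<rho>) ^ (n - 1)) * r' \<rho>
            * (r \<rho> / \<rho>) ^ (2 * n - 3)"
      using ode[OF \<rho>1] flat[OF \<rho>] by simp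
  qed (use n2 R d\<phi> d\<phi>' dh dh' \<phi>_conv h_conv \<phi>_pos in auto)
  have "eventually (\<lambda>\<rho>. T_fun n f \<phi>' h' r r' \<rho>
      = (r \<rho> / \<rho>) ^ (n - 1) * (\<phi>' (r' \<rho>) + h' (r' \<rho> * (r \<rho> / \<rho>) ^ (n - 1)) * (r \<rho> / \<rho>) ^ (n - 1)))
      (at_right 0)"
    unfolding eventually_at_right_field T_fun_def using R flat by (intro exI[of _ R]) auto
  with T_lim show "((\<lambda>\<rho>. (r \<rho> / \<rho>) ^ (n - 1)
      * (\<phi>' (r' \<rho>) + h' (r' \<rho> * (r \<rho> / \<rho>) ^ (n - 1)) * (r \<rho> / \<rho>) ^ (n - 1))) \<longlongrightarrow> 0) (at_right 0)"
    by (rule Lim_transform_eventually)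
qed

theorem theorem4p4:
  fixes n :: nat and \<kappa> f f' \<phi> \<phi>' \<phi>'' h h' h'' :: "real \<Rightarrow> real" and \<epsilon> :: real
  assumes n2: "n \<ge> 2"
    and \<kappa>_cont: "continuous_on {0..} \<kappa>"
    and f_deriv: "\<And>x. x \<ge> 0 \<Longrightarrow> (f has_real_derivative f' x) (at x within {0..})"
    and f'_deriv: "\<And>x. x \<ge> 0 \<Longrightarrow> (f' has_real_derivative (- \<kappa> x * f x)) (at x within {0..})"
    and f0: "f 0 = 0" and f'0: "f' 0 = 1"
    and mu: "mu_plus \<kappa> 1 \<le> 1"
    and eps: "0 < \<epsilon>" "\<epsilon> \<le> 1" and \<kappa>_zero: "\<And>s. 0 < s \<Longrightarrow> s < \<epsilon> \<Longrightarrow> \<kappa> s = 0"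
    and A1_d1: "\<And>v. v > 0 \<Longrightarrow> (h has_real_derivative h' v) (at v)"
    and A1_d2: "\<And>v. v > 0 \<Longrightarrow> (h' has_real_derivative h'' v) (at v)"
    and A1_c2: "continuous_on {0<..} h''"
    and A1_conv: "strictly_convex_on {0<..} h"
    and A2_0: "filterlim h at_top (at_right 0)"
    and A2_inf: "filterlim (\<lambda>v. h v / v) at_top at_top"
    and A4_d1: "\<And>v. v > 0 \<Longrightarrow> (\<phi> has_real_derivative \<phi>' v) (at v)"
    and A4_d2: "\<And>v. v > 0 \<Longrightarrow> (\<phi>' has_real_derivative \<phi>'' v) (at v)"
    and A4_c2: "continuous_on {0<..} \<phi>''"
    and A4_pos: "\<And>v. v > 0 \<Longrightarrow> \<phi> v > 0"
    and A4_conv: "convex_on {0<..} \<phi>"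
  shows "\<exists>lam0>0. \<forall>lam. 0 < lam \<and> lam < lam0 \<longrightarrow>
           \<not> (\<exists>r r' r'' r0. equilibrium_solution n f f' \<phi>' \<phi>'' h' h'' lam r r' r'' r0
                             \<and> cavitating n f \<phi>' h' r r' r0)"
proof -
  obtain v0 where v0: "0 < v0" "v0 \<le> 1"
    and h_decr: "\<And>a c. 0 < a \<Longrightarrow> a < c \<Longrightarrow> c \<le> v0 \<Longrightarrow> h c < h a"
    using strictly_convex_decreasing_near_zero[OF A1_conv A2_0] by blast
  have h_conv: "convex_on {0<..} h"
    using strictly_convex_on_imp_convex_on[OF A1_conv] by (simp add: convex_real_interval)
  define R where "R = \<epsilon> / 2"
  have R: "0 < R" "R < \<epsilon>" using eps by (auto simp: R_def)
  show ?thesis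
  proof (intro exI[of _ "R * v0"] conjI allI impI notI)
    show "0 < R * v0" using R v0 by simp
    fix lam assume lam: "0 < lam \<and> lam < R * v0"
    assume "\<exists>r r' r'' r0. equilibrium_solution n f f' \<phi>' \<phi>'' h' h'' lam r r' r'' r0
                             \<and> cavitating n f \<phi>' h' r r' r0"
    then obtain r r' r'' r0 where eq: "equilibrium_solution n f f' \<phi>' \<phi>'' h' h'' lam r r' r'' r0"
      and cav: "cavitating n f \<phi>' h' r r' r0" by blast
    have "lam < R" using lam R v0 mult_left_le[of v0 R] by linarith
    hence "lam \<le> \<epsilon>" using R by simp
    note flat = cavitating_equilibrium_flat_near_center[OF n2 f_deriv f'_deriv f0 f'0 \<kappa>_zero R eps(2)
        this A4_d1 A4_d2 A1_d1 A1_d2 A4_conv h_conv A4_pos eq cav]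
    interpret F: flat_equilibrium n \<phi> \<phi>' \<phi>'' h h' h'' r r' r'' R by (rule flat(1))
    have "((\<lambda>\<rho>. F.stretch \<rho> ^ (n - 1) * F.stress \<rho>) \<longlongrightarrow> 0) (at_right 0)"
      using flat(4) unfolding F.stress_def F.jacobian_def F.stretch_def .
    \<comment> \<open>The stretch r(R)/R is at least v0, whereas r(R) < r(1) = lam < R v0.\<close>
    from F.stretch_bounded_below[OF flat(2,3) this v0(2) h_decr]
    have "v0 \<le> r R / R" by (simp add: F.stretch_def)
    moreover have "r R < lam" using equilibrium_profile_bounds(2)[OF eq, of R] R eps by simp
    ultimately show False using lam R by (simp add: field_simps)
  qed
qed

end
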